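(* If $G$ is an optimal digraph on $n$ vertices, then $\beta_G < n/2$.
   Context: Digraphs are finite, loopless, with at most one edge $uv$ per ordered pair. A digraph is $2$-free if no distinct $u,v$ have both $uv,vu$ as edges. A circular interval digraph is a digraph together with a fixed arrangement of its vertices in a circle such that for all distinct $u,v,w$ in clockwise order with $uw\in E(G)$, also $uv,vw\in E(G)$. For distinct $u,v$, $d(u,v) = 1 + |\{w: u,w,v \text{ distinct, in clockwise order}\}|$; this is the length of the ordered pair $uv$. A non-edge is an ordered pair $(u,v)$ of distinct vertices with neither $uv$ nor $vu$ an edge; its length is $d(u,v)$. $\alpha_G$ is the minimum length of a non-edge ($\infty$ if there is none) and $\beta_G$ the maximum length of an edge ($0$ if there is none). $\xi(G)$ is the number of pairs $(uv,(w,x))$ with $uv\in E(G)$, $(w,x)$ a non-edge, and $d(u,v)>d(w,x)$. $\tilde P_3(G)$ is the number of triples $(a,b,c)$ of distinct vertices with $ab,bc\in E(G)$ and $ac,ca\notin E(G)$. For fixed $n\ge 4$, $G$ is optimal if it is a $2$-free circular interval digraph on $n$ vertices that maximizes $\tilde P_3$ among all $2$-free circular interval digraphs on $n$ vertices and, subject to this, minimizes $\xi(G)$. *)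

theory Defs
  imports Complex_Main
begin

text \<open>A digraph on n vertices together with a circular arrangement is encoded as an
  edge set E on the vertex set {0..<n}, the vertices being arranged clockwise in the
  order 0, 1, ..., n-1.\<close>

definition cdist :: "nat \<Rightarrow> nat \<Rightarrow> nat \<Rightarrow> nat" where
  "cdist n u v = (v + n - u) mod n"

definition clockwise :: "nat \<Rightarrow> nat \<Rightarrow> nat \<Rightarrow> nat \<Rightarrow> bool" where
  "clockwise n u v w \<longleftrightarrow> u \<noteq> v \<and> v \<noteq> w \<and> u \<noteq> w \<and>
     cdist n u v < cdist n u w"

definition is_digraph :: "nat \<Rightarrow> (nat \<times> nat) set \<Rightarrow> bool" where
  "is_digraph n E \<longleftrightarrow> E \<subseteq> {0..<n} \<times> {0..<n} \<and> (\<forall>v. (v, v) \<notin> E)"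

definition two_free :: "(nat \<times> nat) set \<Rightarrow> bool" where
  "two_free E \<longleftrightarrow> (\<forall>u v. u \<noteq> v \<longrightarrow> \<not> ((u, v) \<in> E \<and> (v, u) \<in> E))"

definition circ_interval :: "nat \<Rightarrow> (nat \<times> nat) set \<Rightarrow> bool" where
  "circ_interval n E \<longleftrightarrow> is_digraph n E \<and>
     (\<forall>u v w. u < n \<and> v < n \<and> w < n \<and> clockwise n u v w \<and> (u, w) \<in> E
        \<longrightarrow> (u, v) \<in> E \<and> (v, w) \<in> E)"

definition nonedge :: "nat \<Rightarrow> (nat \<times> nat) set \<Rightarrow> nat \<Rightarrow> nat \<Rightarrow> bool" where
  "nonedge n E w x \<longleftrightarrow> w < n \<and> x < n \<and> w \<noteq> x \<and> (w, x) \<notin> E \<and> (x, w) \<notin> E"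

definition beta :: "nat \<Rightarrow> (nat \<times> nat) set \<Rightarrow> nat" where
  "beta n E = Max ({cdist n u v | u v. (u, v) \<in> E} \<union> {0})"

definition xi :: "nat \<Rightarrow> (nat \<times> nat) set \<Rightarrow> nat" where
  "xi n E = card {((u, v), (w, x)). (u, v) \<in> E \<and> nonedge n E w x \<and>
                                    cdist n u v > cdist n w x}"

definition P3 :: "nat \<Rightarrow> (nat \<times> nat) set \<Rightarrow> nat" where
  "P3 n E = card {(a, b, c). a < n \<and> b < n \<and> c < n \<and> a \<noteq> b \<and> b \<noteq> c \<and> a \<noteq> c \<and>
                             (a, b) \<in> E \<and> (b, c) \<in> E \<and> (a, c) \<notin> E \<and> (c, a) \<notin> E}"

definition admissible :: "nat \<Rightarrow> (nat \<times> nat) set \<Rightarrow> bool" where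
  "admissible n E \<longleftrightarrow> circ_interval n E \<and> two_free E"

definition optimal :: "nat \<Rightarrow> (nat \<times> nat) set \<Rightarrow> bool" where
  "optimal n E \<longleftrightarrow> admissible n E \<and>
     (\<forall>E'. admissible n E' \<longrightarrow> P3 n E' \<le> P3 n E) \<and>
     (\<forall>E'. admissible n E' \<and> P3 n E' = P3 n E \<longrightarrow> xi n E \<le> xi n E')"

end

theory Submission
  imports Defs
begin

text \<open>
  Suppose E is optimal but beta n E >= n/2, and let uw be an edge of
  maximal length k = beta n E.  Deleting uw keeps the digraph admissible (a longest
  edge is never forced by the circular interval property).  The deletion destroys
  the induced 2-paths u -> w -> c and a -> u -> w, but creates the k - 1 induced
  2-paths u -> b -> w through the vertices b strictly inside the arc of uw.  The
  destroyed paths are indexed by vertices disjoint from that arc and from u, w, so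
  there are at most n - k - 1 <= k - 1 of them.  By optimality equality holds, so
  n = 2k and some vertex extends uw, which yields a non-edge shorter than k.  Then
  the deletion keeps P3 and strictly decreases xi, contradicting optimality.
\<close>

lemma cdist_eq:
  assumes "a < n" "b < n"
  shows "cdist n a b = (if a \<le> b then b - a else b + n - a)"
proof (cases "a \<le> b")
  case True
  then have "b + n - a = (b - a) + n" by simp
  then show ?thesis using True assms by (simp add: cdist_def del: add_diff_assoc2)
next
  case False
  then show ?thesis using assms by (simp add: cdist_def)
qed

lemma cdist_less: "a < n \<Longrightarrow> b < n \<Longrightarrow> cdist n a b < n"
  by (simp add: cdist_eq) linarith

lemma cdist_pos: "a < n \<Longrightarrow> b < n \<Longrightarrow> a \<noteq> b \<Longrightarrow> 0 < cdist n a b"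
  by (simp add: cdist_eq)

lemma cdist_antipodal: "a < n \<Longrightarrow> b < n \<Longrightarrow> a \<noteq> b \<Longrightarrow> cdist n a b + cdist n b a = n"
  by (simp add: cdist_eq)

lemma cdist_inj_right:
  "a < n \<Longrightarrow> b < n \<Longrightarrow> c < n \<Longrightarrow> cdist n a b = cdist n a c \<Longrightarrow> b = c"
  by (simp add: cdist_eq split: if_splits)

lemma cdist_inj_left:
  "a < n \<Longrightarrow> b < n \<Longrightarrow> c < n \<Longrightarrow> cdist n a c = cdist n b c \<Longrightarrow> a = b"
  by (simp add: cdist_eq split: if_splits)

lemma clockwise_add:
  assumes "a < n" "b < n" "c < n" "clockwise n a b c"
  shows "cdist n a c = cdist n a b + cdist n b c"
  using assms by (auto simp: clockwise_def cdist_eq split: if_splits)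

lemma cdist_shift: "u < n \<Longrightarrow> j < n \<Longrightarrow> cdist n u ((u + j) mod n) = j"
  by (cases "u + j < n") (auto simp: cdist_eq le_mod_geq)

lemma admissible_edge:
  assumes "admissible n E" "(a, b) \<in> E"
  shows "a < n" "b < n" "a \<noteq> b" "(b, a) \<notin> E"
proof -
  have d: "is_digraph n E" and t: "two_free E"
    using assms(1) unfolding admissible_def circ_interval_def by simp_all
  from d assms(2) show "a < n" "b < n" "a \<noteq> b" unfolding is_digraph_def by auto
  with t assms(2) show "(b, a) \<notin> E" unfolding two_free_def by auto
qed

lemma admissible_interval:
  assumes "admissible n E" "a < n" "b < n" "c < n" "clockwise n a b c" "(a, c) \<in> E"
  shows "(a, b) \<in> E \<and> (b, c) \<in> E"
  using assms unfolding admissible_def circ_interval_def by blast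

lemma digraph_finite: "is_digraph n E \<Longrightarrow> finite E"
  unfolding is_digraph_def using finite_subset by blast

lemma beta_finite: "is_digraph n E \<Longrightarrow> finite {cdist n a b | a b. (a, b) \<in> E}"
proof -
  assume "is_digraph n E"
  moreover have "{cdist n a b | a b. (a, b) \<in> E} = (\<lambda>(a, b). cdist n a b) ` E" by auto
  ultimately show ?thesis using digraph_finite by simp
qed

lemma beta_ge: "is_digraph n E \<Longrightarrow> (a, b) \<in> E \<Longrightarrow> cdist n a b \<le> beta n E"
  unfolding beta_def by (rule Max_ge) (auto simp: beta_finite)

lemma beta_attained:
  assumes "is_digraph n E" "0 < beta n E"
  obtains u w where "(u, w) \<in> E" "cdist n u w = beta n E"
proof -
  have "beta n E \<in> {cdist n a b | a b. (a, b) \<in> E} \<union> {0}"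
    unfolding beta_def using beta_finite[OF assms(1)] by (intro Max_in) auto
  then show ?thesis using assms(2) that by auto
qed

definition between :: "nat \<Rightarrow> nat \<Rightarrow> nat \<Rightarrow> nat set" where
  "between n u w = {b. b < n \<and> clockwise n u b w}"

lemma card_between:
  assumes "u < n" "w < n" "u \<noteq> w"
  shows "card (between n u w) = cdist n u w - 1"
proof -
  have "bij_betw (cdist n u) (between n u w) {1..<cdist n u w}"
    unfolding bij_betw_def
  proof
    show "inj_on (cdist n u) (between n u w)"
      using cdist_inj_right assms(1) unfolding between_def inj_on_def by blast
    show "cdist n u ` between n u w = {1..<cdist n u w}"
    proof
      show "cdist n u ` between n u w \<subseteq> {1..<cdist n u w}"
        using cdist_pos assms(1) unfolding between_def clockwise_def by fastforce
      show "{1..<cdist n u w} \<subseteq> cdist n u ` between n u w"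
      proof
        fix j assume j: "j \<in> {1..<cdist n u w}"
        define b where "b = (u + j) mod n"
        have "j < n" using j cdist_less[OF assms(1,2)] by simp
        then have b: "b < n" "cdist n u b = j"
          using cdist_shift assms(1) by (auto simp: b_def)
        moreover have "cdist n u u = 0" by (simp add: cdist_def)
        ultimately have "b \<noteq> u" "b \<noteq> w" using j by auto
        then have "b \<in> between n u w" using b j assms(3) unfolding between_def clockwise_def by auto
        then show "j \<in> cdist n u ` between n u w" using b by blast
      qed
    qed
  qed
  then show ?thesis by (simp add: bij_betw_same_card)
qed

text \<open>Deleting a longest edge keeps the digraph admissible: by additivity of
  distances, a deleted edge of maximal length can never be one of the two shorter
  edges that the interval property demands below a longer edge.\<close>

lemma delete_longest_edge_admissible:
  assumes adm: "admissible n E" and uw: "(u, w) \<in> E"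
    and longest: "\<And>a b. (a, b) \<in> E \<Longrightarrow> cdist n a b \<le> cdist n u w"
  shows "admissible n (E - {(u, w)})"
proof -
  have "is_digraph n E" using adm by (simp add: admissible_def circ_interval_def)
  then have "is_digraph n (E - {(u, w)})" unfolding is_digraph_def by blast
  moreover have "two_free (E - {(u, w)})"
    using admissible_edge(4)[OF adm] unfolding two_free_def by auto
  moreover have "(a, b) \<in> E - {(u, w)} \<and> (b, c) \<in> E - {(u, w)}"
    if abc: "a < n" "b < n" "c < n" "clockwise n a b c" "(a, c) \<in> E - {(u, w)}" for a b c
  proof -
    have split: "cdist n a c = cdist n a b + cdist n b c" using clockwise_add abc by blast
    have "0 < cdist n a b" "0 < cdist n b c"
      using abc cdist_pos unfolding clockwise_def by auto
    moreover have "cdist n a c \<le> cdist n u w" using longest abc(5) by blast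
    ultimately have "(a, b) \<noteq> (u, w)" "(b, c) \<noteq> (u, w)" using split by auto
    then show ?thesis using admissible_interval[OF adm abc(1-4)] abc(5) by blast
  qed
  ultimately show ?thesis unfolding admissible_def circ_interval_def by blast
qed

text \<open>The vertices c for which u, w, c is an induced 2-path, and the vertices a for
  which a, u, w is one.  These are the induced 2-paths destroyed by deleting uw.\<close>

definition extend_after :: "nat \<Rightarrow> (nat \<times> nat) set \<Rightarrow> nat \<Rightarrow> nat \<Rightarrow> nat set" where
  "extend_after n E u w = {c. c < n \<and> c \<noteq> u \<and> (w, c) \<in> E \<and> (u, c) \<notin> E \<and> (c, u) \<notin> E}"

definition extend_before :: "nat \<Rightarrow> (nat \<times> nat) set \<Rightarrow> nat \<Rightarrow> nat \<Rightarrow> nat set" where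
  "extend_before n E u w = {a. a < n \<and> a \<noteq> w \<and> (a, u) \<in> E \<and> (a, w) \<notin> E \<and> (w, a) \<notin> E}"

lemma between_edges:
  assumes "admissible n E" "(u, w) \<in> E" "b \<in> between n u w"
  shows "(u, b) \<in> E \<and> (b, w) \<in> E"
proof -
  have "u < n" "w < n" using admissible_edge[OF assms(1,2)] by auto
  then show ?thesis using assms admissible_interval unfolding between_def by simp
qed

text \<open>The sets extend_after, extend_before, the open arc from u to w and {u, w} are
  pairwise disjoint sets of vertices, which gives a bound on their total size.\<close>

lemma extension_count:
  assumes adm: "admissible n E" and uw: "(u, w) \<in> E"
  shows "card (extend_after n E u w) + card (extend_before n E u w) + cdist n u w + 1 \<le> n"
proof -
  let ?A = "extend_after n E u w" and ?B = "extend_before n E u w" and ?M = "between n u w"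
  have u: "u < n" "w < n" "u \<noteq> w" using admissible_edge[OF adm uw] by auto
  have fin: "finite ?A" "finite ?B" "finite ?M"
    unfolding extend_after_def extend_before_def between_def by auto
  have "?A \<inter> ?B = {}" unfolding extend_after_def extend_before_def by auto
  moreover have "(?A \<union> ?B) \<inter> ?M = {}"
    using between_edges[OF adm uw] admissible_edge(4)[OF adm]
    unfolding extend_after_def extend_before_def by fastforce
  moreover have "(?A \<union> ?B \<union> ?M) \<inter> {u, w} = {}"
    using admissible_edge(3)[OF adm]
    unfolding extend_after_def extend_before_def between_def clockwise_def by fastforce
  ultimately have "card (?A \<union> ?B \<union> ?M \<union> {u, w}) = card ?A + card ?B + card ?M + 2"
    using fin u by (simp add: card_Un_disjoint)
  moreover have "card (?A \<union> ?B \<union> ?M \<union> {u, w}) \<le> card {0..<n}"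
    using u unfolding extend_after_def extend_before_def between_def by (intro card_mono) auto
  moreover have "card ?M + 1 = cdist n u w" using card_between u cdist_pos by fastforce
  ultimately show ?thesis by simp
qed

definition P3set :: "nat \<Rightarrow> (nat \<times> nat) set \<Rightarrow> (nat \<times> nat \<times> nat) set" where
  "P3set n E = {(a, b, c). a < n \<and> b < n \<and> c < n \<and> a \<noteq> b \<and> b \<noteq> c \<and> a \<noteq> c \<and>
                             (a, b) \<in> E \<and> (b, c) \<in> E \<and> (a, c) \<notin> E \<and> (c, a) \<notin> E}"

lemma P3_card: "P3 n E = card (P3set n E)"
  by (simp add: P3_def P3set_def)

lemma P3set_finite: "finite (P3set n E)"
proof -
  have "P3set n E \<subseteq> {0..<n} \<times> {0..<n} \<times> {0..<n}" by (auto simp: P3set_def)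
  then show ?thesis using finite_subset by blast
qed

text \<open>Deleting the edge uw destroys only the 2-paths through uw, but creates the
  d(u,w) - 1 new induced 2-paths u -> b -> w with b inside the arc of uw.\<close>

lemma P3_delete_edge:
  assumes adm: "admissible n E" and uw: "(u, w) \<in> E"
  shows "P3 n E + (cdist n u w - 1)
           \<le> P3 n (E - {(u, w)}) + card (extend_after n E u w) + card (extend_before n E u w)"
proof -
  let ?T = "P3set n E" and ?T' = "P3set n (E - {(u, w)})"
  let ?A = "extend_after n E u w" and ?B = "extend_before n E u w" and ?M = "between n u w"
  have u: "u < n" "w < n" "u \<noteq> w" "(w, u) \<notin> E" using admissible_edge[OF adm uw] by auto
  have finAB: "finite ?A" "finite ?B"
    unfolding extend_after_def extend_before_def by auto
  let ?L = "(\<lambda>c. (u, w, c)) ` ?A \<union> (\<lambda>a. (a, u, w)) ` ?B"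
  have "card ?L \<le> card ((\<lambda>c. (u, w, c)) ` ?A) + card ((\<lambda>a. (a, u, w)) ` ?B)"
    by (rule card_Un_le)
  also have "\<dots> \<le> card ?A + card ?B"
    using card_image_le[OF finAB(1)] card_image_le[OF finAB(2)] by (rule add_mono)
  finally have cardL: "card ?L \<le> card ?A + card ?B" .
  have "?T \<subseteq> (?T \<inter> ?T') \<union> ?L"
    unfolding P3set_def extend_after_def extend_before_def by auto
  then have "card ?T \<le> card ((?T \<inter> ?T') \<union> ?L)"
    using P3set_finite finAB by (intro card_mono) auto
  also have "\<dots> \<le> card (?T \<inter> ?T') + card ?L" by (rule card_Un_le)
  finally have lost: "card ?T \<le> card (?T \<inter> ?T') + card ?A + card ?B" using cardL by linarith
  let ?G = "(\<lambda>b. (u, b, w)) ` ?M"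
  have gainT': "?G \<subseteq> ?T'"
    using between_edges[OF adm uw] u unfolding P3set_def between_def clockwise_def by auto
  have gainT: "?G \<inter> ?T = {}" using uw unfolding P3set_def by auto
  have "card (?T \<inter> ?T') + card ?G = card ((?T \<inter> ?T') \<union> ?G)"
    using gainT P3set_finite by (intro card_Un_disjoint[symmetric]) (auto simp: between_def)
  also have "\<dots> \<le> card ?T'" using gainT' P3set_finite by (intro card_mono) auto
  finally have gained: "card (?T \<inter> ?T') + card ?G \<le> card ?T'" .
  have "card ?G = cdist n u w - 1"
    using card_between[OF u(1-3)] by (simp add: card_image inj_on_def)
  with gained have "card (?T \<inter> ?T') + (cdist n u w - 1) \<le> card ?T'" by simp
  then show ?thesis unfolding P3_card using lost by linarith
qed

lemma nonedge_sym: "nonedge n E c d \<longleftrightarrow> nonedge n E d c"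
  unfolding nonedge_def by auto

text \<open>When uw has length exactly n/2, any vertex extending uw to an induced 2-path
  yields a non-edge not of length n/2, so one of its two orientations is shorter
  than uw.\<close>

lemma short_nonedge:
  assumes adm: "admissible n E" and uw: "(u, w) \<in> E" and half: "n = 2 * cdist n u w"
    and ext: "extend_after n E u w \<union> extend_before n E u w \<noteq> {}"
  obtains c d where "nonedge n E c d" "cdist n c d < cdist n u w"
proof -
  have u: "u < n" "w < n" using admissible_edge[OF adm uw] by auto
  have short: "\<exists>c d. nonedge n E c d \<and> cdist n c d < cdist n u w"
    if ne: "nonedge n E x y" and len: "cdist n x y \<noteq> cdist n u w" for x y
  proof -
    have "x < n" "y < n" "x \<noteq> y" using ne unfolding nonedge_def by auto
    then have "cdist n x y + cdist n y x = n" by (rule cdist_antipodal)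
    then have "cdist n x y < cdist n u w \<or> cdist n y x < cdist n u w"
      using half len by linarith
    then show ?thesis using ne nonedge_sym by blast
  qed
  from ext consider c where "c \<in> extend_after n E u w" | a where "a \<in> extend_before n E u w"
    by blast
  then have "\<exists>c d. nonedge n E c d \<and> cdist n c d < cdist n u w"
  proof cases
    case (1 c)
    then have "nonedge n E u c" "c < n" "c \<noteq> w"
      using u admissible_edge(3)[OF adm] unfolding extend_after_def nonedge_def by auto
    then show ?thesis using short cdist_inj_right u by metis
  next
    case (2 a)
    then have "nonedge n E a w" "a < n" "a \<noteq> u"
      using u admissible_edge(3)[OF adm] unfolding extend_before_def nonedge_def by auto
    then show ?thesis using short cdist_inj_left u by metis
  qed
  then show ?thesis using that by blast
qed

definition Xset :: "nat \<Rightarrow> (nat \<times> nat) set \<Rightarrow> ((nat \<times> nat) \<times> (nat \<times> nat)) set" where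
  "Xset n E = {((u, v), (w, x)). (u, v) \<in> E \<and> nonedge n E w x \<and> cdist n u v > cdist n w x}"

lemma xi_card: "xi n E = card (Xset n E)"
  by (simp add: xi_def Xset_def)

text \<open>Deleting a longest edge uw with d(u,w) <= n/2 only adds the non-edges (u,w) and
  (w,u), which are at least as long as every edge and hence create no new pairs for
  xi; and it removes the pair formed by uw and a shorter non-edge.\<close>

lemma xi_delete_edge:
  assumes adm: "admissible n E" and uw: "(u, w) \<in> E"
    and longest: "\<And>a b. (a, b) \<in> E \<Longrightarrow> cdist n a b \<le> cdist n u w"
    and half: "2 * cdist n u w \<le> n"
    and short: "nonedge n E c d" "cdist n c d < cdist n u w"
  shows "xi n (E - {(u, w)}) < xi n E"
proof -
  have u: "u < n" "w < n" "u \<noteq> w" using admissible_edge[OF adm uw] by auto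
  have "finite E" using adm digraph_finite unfolding admissible_def circ_interval_def by blast
  moreover have "Xset n E \<subseteq> E \<times> ({0..<n} \<times> {0..<n})"
    unfolding Xset_def nonedge_def by auto
  ultimately have fin: "finite (Xset n E)" using finite_subset by blast
  have "cdist n w u \<ge> cdist n u w" using cdist_antipodal[OF u] half by linarith
  then have "Xset n (E - {(u, w)}) \<subseteq> Xset n E"
    using longest unfolding Xset_def nonedge_def by fastforce
  moreover have "((u, w), (c, d)) \<in> Xset n E - Xset n (E - {(u, w)})"
    using uw short unfolding Xset_def by auto
  ultimately have "Xset n (E - {(u, w)}) \<subset> Xset n E" by blast
  then show ?thesis unfolding xi_card using fin by (rule psubset_card_mono[rotated])
qed

theorem mainTheorem4:
  fixes n :: nat and E :: "(nat \<times> nat) set"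
  assumes "n \<ge> 4" and "optimal n E"
  shows "real (beta n E) < real n / 2"
proof (rule ccontr)
  assume "\<not> ?thesis"
  then have wide: "n \<le> 2 * beta n E" by linarith
  have adm: "admissible n E"
    and best: "\<And>E'. admissible n E' \<Longrightarrow> P3 n E' \<le> P3 n E"
    and tiebreak: "\<And>E'. admissible n E' \<Longrightarrow> P3 n E' = P3 n E \<Longrightarrow> xi n E \<le> xi n E'"
    using assms(2) unfolding optimal_def by blast+
  have dig: "is_digraph n E" using adm unfolding admissible_def circ_interval_def by blast
  obtain u w where uw: "(u, w) \<in> E" and k: "cdist n u w = beta n E"
  proof (rule beta_attained[OF dig])
    show "0 < beta n E" using wide assms(1) by linarith
  qed
  have longest: "\<And>a b. (a, b) \<in> E \<Longrightarrow> cdist n a b \<le> cdist n u w"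
    using beta_ge[OF dig] k by simp
  define E' where "E' = E - {(u, w)}"
  have adm': "admissible n E'"
    unfolding E'_def using delete_longest_edge_admissible[OF adm uw longest] .
  let ?ext = "card (extend_after n E u w) + card (extend_before n E u w)"
  have "P3 n E + (cdist n u w - 1) \<le> P3 n E' + ?ext"
    using P3_delete_edge[OF adm uw] unfolding E'_def by simp
  moreover have "?ext + cdist n u w + 1 \<le> n" by (rule extension_count[OF adm uw])
  moreover have "P3 n E' \<le> P3 n E" using best[OF adm'] .
  ultimately have half: "n = 2 * cdist n u w" and same: "P3 n E' = P3 n E"
    and "?ext \<noteq> 0" using wide k assms(1) by linarith+
  then have "extend_after n E u w \<union> extend_before n E u w \<noteq> {}" by auto
  then obtain c d where "nonedge n E c d" "cdist n c d < cdist n u w"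
    using short_nonedge[OF adm uw half] by blast
  then have "xi n E' < xi n E"
    unfolding E'_def using xi_delete_edge[OF adm uw longest] half by simp
  then show False using tiebreak[OF adm' same] by linarith
qed

end
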